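(* Let $G$ be a finite simple graph whose edge ideal $I=I(G)$ satisfies $v(I)=1$. Then $v(I^{n+1})=2n+1$ for all $n\ge 1$.
   Context: $K$ is a field and $S=K[x_1,\dots,x_t]$ is standard graded, with the vertices of $G$ being $x_1,\dots,x_t$. The edge ideal is $I(G)=\langle x_ix_j : \{x_i,x_j\}\text{ an edge of } G\rangle$. For a proper graded ideal $J$, the $v$-number is $v(J)=\min\{k\ge 0 : \exists f\in S_k,\ \mathcal P\in\operatorname{Ass}(S/J) \text{ with } (J:f)=\mathcal P\}$. *)

theory Defs
  imports Main "HOL-Library.Poly_Mapping"
begin

text \<open>Polynomial ring S = K[x_v : v vertex] for a finite vertex type 'v:
  polynomials are finitely supported maps from monomials (exponent vectors
  of type v to nat) to coefficients in K.\<close>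

type_synonym ('v, 'k) mpoly = "('v \<Rightarrow>\<^sub>0 nat) \<Rightarrow>\<^sub>0 'k"

definition is_ideal :: "'a::comm_ring_1 set \<Rightarrow> bool" where
  "is_ideal I \<longleftrightarrow> 0 \<in> I \<and> (\<forall>a\<in>I. \<forall>b\<in>I. a + b \<in> I) \<and> (\<forall>r. \<forall>a\<in>I. r * a \<in> I)"

definition ideal_gen :: "'a::comm_ring_1 set \<Rightarrow> 'a set" where
  "ideal_gen A = \<Inter> {I. is_ideal I \<and> A \<subseteq> I}"

definition ideal_prod :: "'a::comm_ring_1 set \<Rightarrow> 'a set \<Rightarrow> 'a set" where
  "ideal_prod I J = ideal_gen {a * b | a b. a \<in> I \<and> b \<in> J}"

fun ideal_pow :: "'a::comm_ring_1 set \<Rightarrow> nat \<Rightarrow> 'a set" where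
  "ideal_pow I 0 = UNIV"
| "ideal_pow I (Suc n) = ideal_prod I (ideal_pow I n)"

definition colon :: "'a::comm_ring_1 set \<Rightarrow> 'a \<Rightarrow> 'a set" where
  "colon J f = {g. g * f \<in> J}"

definition prime_ideal :: "'a::comm_ring_1 set \<Rightarrow> bool" where
  "prime_ideal P \<longleftrightarrow> is_ideal P \<and> P \<noteq> UNIV \<and> (\<forall>a b. a * b \<in> P \<longrightarrow> a \<in> P \<or> b \<in> P)"

text \<open>Associated primes Ass(S/J): primes of the form (J : f).\<close>
definition Ass :: "'a::comm_ring_1 set \<Rightarrow> 'a set set" where
  "Ass J = {P. prime_ideal P \<and> (\<exists>f. colon J f = P)}"

definition mdeg :: "('v::finite \<Rightarrow>\<^sub>0 nat) \<Rightarrow> nat" where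
  "mdeg m = (\<Sum>v\<in>UNIV. Poly_Mapping.lookup m v)"

text \<open>f \<in> S_k: f is homogeneous of degree k (0 belongs to every S_k).\<close>
definition homogeneous :: "nat \<Rightarrow> ('v::finite, 'k::field) mpoly \<Rightarrow> bool" where
  "homogeneous k f \<longleftrightarrow> (\<forall>m\<in>Poly_Mapping.keys f. mdeg m = k)"

definition v_number :: "('v::finite, 'k::field) mpoly set \<Rightarrow> nat" where
  "v_number J = (LEAST k. \<exists>f P. homogeneous k f \<and> P \<in> Ass J \<and> colon J f = P)"

definition simple_graph :: "('v \<Rightarrow> 'v \<Rightarrow> bool) \<Rightarrow> bool" where
  "simple_graph E \<longleftrightarrow> (\<forall>x y. E x y \<longrightarrow> E y x) \<and> (\<forall>x. \<not> E x x)"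

definition var_prod :: "'v \<Rightarrow> 'v \<Rightarrow> ('v, 'k::field) mpoly" where
  "var_prod i j = Poly_Mapping.single (Poly_Mapping.single i 1 + Poly_Mapping.single j 1) 1"

definition edge_ideal :: "('v \<Rightarrow> 'v \<Rightarrow> bool) \<Rightarrow> ('v::finite, 'k::field) mpoly set" where
  "edge_ideal E = ideal_gen {var_prod i j | i j. E i j}"

end

theory Submission
  imports Defs
begin

text \<open>
  For a set C of vertices, the polynomials all of whose monomials have degree at least d in the
  variables of C form an ideal; for d = 1 it is the monomial prime (x_c : c \<in> C). If every
  monomial of J has C-degree larger than that of a monomial u and x_c u \<in> J for all c \<in> C, then
  (J : u) = (x_c : c \<in> C), so deg u is a candidate for v(J).

  If v(I) = 1, say (I : f) = P with deg f = 1, pick a variable x occurring in f. Whenever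
  x_z \<in> P, the monomial x_z x occurs in x_z f \<in> I, so z is a neighbour of x; as the prime P
  contains I, it contains a variable of every edge, so the neighbourhood N(x) is a vertex cover.
  For an edge xy the monomial u = (xy)^n x of degree 2n + 1 has N(x)-degree n, while all
  monomials of I^(n+1) have N(x)-degree at least n + 1, hence (I^(n+1) : u) = (x_c : c \<in> N(x)).
  Conversely, every prime containing I^(n+1) contains x or y, so if (I^(n+1) : f) is prime then
  x_z f \<in> I^(n+1) for some z, and comparing degrees gives deg f \<ge> 2n + 1.
\<close>

lemma poly_mapping_sum_single:
  "f = (\<Sum>q\<in>Poly_Mapping.keys f. Poly_Mapping.single q (Poly_Mapping.lookup f q))"
  by (rule poly_mapping_eqI) (simp add: lookup_sum lookup_single when_def in_keys_iff)

lemma lookup_single_mult_add: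
  fixes f :: "'a::cancel_comm_monoid_add \<Rightarrow>\<^sub>0 'b::comm_semiring_1"
  shows "Poly_Mapping.lookup (Poly_Mapping.single m c * f) (m + k) = c * Poly_Mapping.lookup f k"
  by (simp add: lookup_mult lookup_single when_mult)

lemma add_mem_keys_single_mult:
  fixes f :: "'a::cancel_comm_monoid_add \<Rightarrow>\<^sub>0 'b::comm_semiring_1"
  shows "m \<in> Poly_Mapping.keys f \<Longrightarrow> s + m \<in> Poly_Mapping.keys (Poly_Mapping.single s 1 * f)"
  by (simp add: in_keys_iff lookup_single_mult_add)

lemma lookup_mult_keys:
  fixes f g :: "'a::comm_monoid_add \<Rightarrow>\<^sub>0 'b::comm_semiring_0"
  shows "Poly_Mapping.lookup (f * g) k =
    (\<Sum>a\<in>Poly_Mapping.keys f. \<Sum>b\<in>Poly_Mapping.keys g.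
        if a + b = k then Poly_Mapping.lookup f a * Poly_Mapping.lookup g b else 0)"
proof -
  have "f * g = (\<Sum>a\<in>Poly_Mapping.keys f. \<Sum>b\<in>Poly_Mapping.keys g.
      Poly_Mapping.single (a + b) (Poly_Mapping.lookup f a * Poly_Mapping.lookup g b))"
    by (subst (1 2) poly_mapping_sum_single) (simp add: sum_product mult_single)
  then show ?thesis
    by (simp add: lookup_sum lookup_single when_def)
qed

lemma single_power:
  fixes k :: "'a::comm_monoid_add" and a :: "'b::comm_semiring_1"
  shows "Poly_Mapping.single k a ^ n = Poly_Mapping.single (\<Sum>i<n. k) (a ^ n)"
  by (induction n) (simp_all add: mult_single add.commute)

text \<open>Leading-term argument: the product of the monomials of \<open>f\<close> and \<open>g\<close> that are largest
  for the order pulled back along \<open>enc\<close> occurs in \<open>f * g\<close> with a nonzero coefficient.\<close>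

lemma poly_mapping_mult_neq_zero_by_embedding:
  fixes enc :: "'a::comm_monoid_add \<Rightarrow> 'c::{ordered_cancel_comm_monoid_add, linorder}"
    and f g :: "'a \<Rightarrow>\<^sub>0 'b::{comm_semiring_0, semiring_no_zero_divisors}"
  assumes inj: "inj enc" and add: "\<And>a b. enc (a + b) = enc a + enc b"
    and "f \<noteq> 0" "g \<noteq> 0"
  shows "f * g \<noteq> 0"
proof -
  have ex_max: "\<exists>x\<in>Poly_Mapping.keys h. \<forall>y\<in>Poly_Mapping.keys h. enc y \<le> enc x"
    if "h \<noteq> 0" for h :: "'a \<Rightarrow>\<^sub>0 'b"
  proof -
    have "Max (enc ` Poly_Mapping.keys h) \<in> enc ` Poly_Mapping.keys h"
      using that by (intro Max_in) auto
    then obtain x where "x \<in> Poly_Mapping.keys h" "enc x = Max (enc ` Poly_Mapping.keys h)"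
      by auto
    then show ?thesis by (auto intro!: bexI[of _ x] Max_ge)
  qed
  obtain a0 where a0: "a0 \<in> Poly_Mapping.keys f"
    and a0_max: "\<And>a. a \<in> Poly_Mapping.keys f \<Longrightarrow> enc a \<le> enc a0"
    using ex_max[OF \<open>f \<noteq> 0\<close>] by blast
  obtain b0 where b0: "b0 \<in> Poly_Mapping.keys g"
    and b0_max: "\<And>b. b \<in> Poly_Mapping.keys g \<Longrightarrow> enc b \<le> enc b0"
    using ex_max[OF \<open>g \<noteq> 0\<close>] by blast
  have unique: "a + b = a0 + b0 \<longleftrightarrow> a = a0 \<and> b = b0"
    if "a \<in> Poly_Mapping.keys f" "b \<in> Poly_Mapping.keys g" for a b
  proof
    assume "a + b = a0 + b0"
    then have sum_eq: "enc a + enc b = enc a0 + enc b0"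
      by (metis add)
    have "enc a = enc a0"
    proof (rule ccontr)
      assume "enc a \<noteq> enc a0"
      then have "enc a < enc a0" using a0_max[OF that(1)] by simp
      then have "enc a + enc b < enc a0 + enc b0" using b0_max[OF that(2)] by (rule add_less_le_mono)
      with sum_eq show False by simp
    qed
    with sum_eq have "enc b = enc b0" by simp
    with \<open>enc a = enc a0\<close> show "a = a0 \<and> b = b0" using inj by (simp add: inj_eq)
  qed simp
  have "Poly_Mapping.lookup (f * g) (a0 + b0) =
    (\<Sum>a\<in>Poly_Mapping.keys f. \<Sum>b\<in>Poly_Mapping.keys g.
        if a = a0 \<and> b = b0 then Poly_Mapping.lookup f a * Poly_Mapping.lookup g b else 0)"
    unfolding lookup_mult_keys by (intro sum.cong refl) (simp add: unique)
  also have "\<dots> = Poly_Mapping.lookup f a0 * Poly_Mapping.lookup g b0"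
    using a0 b0 by (simp add: conj_commute[of "_ = a0"] sum.delta flip: if_if_eq_conj)
  also have "\<dots> \<noteq> 0"
    using a0 b0 by (simp add: in_keys_iff)
  finally show ?thesis by auto
qed

text \<open>The vertex type carries no order, so monomials are embedded into the lexicographically
  ordered \<open>nat \<Rightarrow>\<^sub>0 nat\<close> along an enumeration of the vertices.\<close>

lemma mpoly_mult_neq_zero:
  fixes f g :: "('v::finite, 'k::idom) mpoly"
  assumes "f \<noteq> 0" "g \<noteq> 0"
  shows "f * g \<noteq> 0"
proof -
  obtain xs :: "'v list" where xs: "set xs = UNIV"
    using finite_list[OF finite_UNIV] by blast
  define enc :: "('v \<Rightarrow>\<^sub>0 nat) \<Rightarrow> (nat \<Rightarrow>\<^sub>0 nat)" where
    "enc m = Poly_Mapping.nth (map (Poly_Mapping.lookup m) xs)" for m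
  have lookup_enc: "Poly_Mapping.lookup (enc m) i =
      (if i < length xs then Poly_Mapping.lookup m (xs ! i) else 0)" for m i
    by (simp add: enc_def nth_default_def)
  have "enc (a + b) = enc a + enc b" for a b
    by (rule poly_mapping_eqI) (simp add: lookup_enc lookup_add)
  moreover have "inj enc"
  proof (rule injI, rule poly_mapping_eqI)
    fix a b v assume "enc a = enc b"
    moreover obtain i where "i < length xs" "xs ! i = v"
      using xs by (metis UNIV_I in_set_conv_nth)
    ultimately show "Poly_Mapping.lookup a v = Poly_Mapping.lookup b v"
      by (metis lookup_enc)
  qed
  ultimately show ?thesis
    using poly_mapping_mult_neq_zero_by_embedding assms by blast
qed

definition var :: "'v \<Rightarrow> ('v, 'k::comm_ring_1) mpoly" where
  "var c = Poly_Mapping.single (Poly_Mapping.single c 1) 1"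

lemma ideal_zero: "is_ideal I \<Longrightarrow> 0 \<in> I"
  and ideal_add: "is_ideal I \<Longrightarrow> a \<in> I \<Longrightarrow> b \<in> I \<Longrightarrow> a + b \<in> I"
  and ideal_mult_left: "is_ideal I \<Longrightarrow> a \<in> I \<Longrightarrow> r * a \<in> I"
  unfolding is_ideal_def by auto

lemma ideal_mult_right: "is_ideal I \<Longrightarrow> a \<in> I \<Longrightarrow> a * r \<in> I"
  using ideal_mult_left[of I a r] by (simp add: mult.commute)

lemma ideal_diff: "is_ideal I \<Longrightarrow> a \<in> I \<Longrightarrow> b \<in> I \<Longrightarrow> a - b \<in> I"
  using ideal_add[of I a "(-1) * b"] ideal_mult_left[of I b "-1"] by simp

lemma ideal_sum: "is_ideal I \<Longrightarrow> (\<And>i. i \<in> A \<Longrightarrow> h i \<in> I) \<Longrightarrow> sum h A \<in> I"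
  by (induction A rule: infinite_finite_induct) (simp_all add: ideal_zero ideal_add)

lemma mult_mem_ideal_by_terms:
  assumes "is_ideal J"
    and "\<And>q. q \<in> Poly_Mapping.keys g \<Longrightarrow> Poly_Mapping.single q (Poly_Mapping.lookup g q) * h \<in> J"
  shows "g * h \<in> J"
proof -
  have "g * h = (\<Sum>q\<in>Poly_Mapping.keys g. Poly_Mapping.single q (Poly_Mapping.lookup g q) * h)"
    by (subst poly_mapping_sum_single) (simp add: sum_distrib_right)
  also have "\<dots> \<in> J"
    using assms by (rule ideal_sum)
  finally show ?thesis .
qed

lemma is_ideal_UNIV: "is_ideal UNIV"
  by (simp add: is_ideal_def)

lemma is_ideal_ideal_gen: "is_ideal (ideal_gen A)"
  unfolding ideal_gen_def is_ideal_def by blast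

lemma ideal_gen_subset: "A \<subseteq> ideal_gen A"
  unfolding ideal_gen_def by blast

lemma ideal_gen_least: "is_ideal J \<Longrightarrow> A \<subseteq> J \<Longrightarrow> ideal_gen A \<subseteq> J"
  unfolding ideal_gen_def by blast

lemma is_ideal_ideal_pow: "is_ideal (ideal_pow I n)"
  by (cases n) (simp_all add: is_ideal_UNIV ideal_pow.simps ideal_prod_def is_ideal_ideal_gen)

declare ideal_pow.simps(2) [simp del]

lemma ideal_pow_Suc_mult: "a \<in> I \<Longrightarrow> b \<in> ideal_pow I n \<Longrightarrow> a * b \<in> ideal_pow I (Suc n)"
  using ideal_gen_subset[of "{a * b |a b. a \<in> I \<and> b \<in> ideal_pow I n}"]
  by (auto simp: ideal_pow.simps ideal_prod_def)

lemma ideal_pow_Suc_least: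
  assumes "is_ideal J" "\<And>a b. a \<in> I \<Longrightarrow> b \<in> ideal_pow I n \<Longrightarrow> a * b \<in> J"
  shows "ideal_pow I (Suc n) \<subseteq> J"
  unfolding ideal_pow.simps ideal_prod_def using assms by (intro ideal_gen_least) auto

lemma power_mem_ideal_pow: "a \<in> I \<Longrightarrow> a ^ n \<in> ideal_pow I n"
  by (induction n) (simp_all add: ideal_pow_Suc_mult)

lemma ideal_subset_colon: "is_ideal J \<Longrightarrow> J \<subseteq> colon J f"
  unfolding colon_def using ideal_mult_right by blast

lemma colon_zero: "is_ideal J \<Longrightarrow> colon J 0 = UNIV"
  unfolding colon_def by (simp add: ideal_zero)

lemma prime_ideal_multD: "prime_ideal P \<Longrightarrow> a * b \<in> P \<Longrightarrow> a \<in> P \<or> b \<in> P"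
  unfolding prime_ideal_def by blast

lemma prime_ideal_powerD: "prime_ideal P \<Longrightarrow> a ^ Suc n \<in> P \<Longrightarrow> a \<in> P"
  by (induction n) (auto dest: prime_ideal_multD)

lemma nonzero_if_colon_prime: "is_ideal J \<Longrightarrow> prime_ideal (colon J f) \<Longrightarrow> f \<noteq> 0"
  using colon_zero by (force simp: prime_ideal_def)

section \<open>Partial degrees and monomial primes\<close>

definition deg_in :: "'v set \<Rightarrow> ('v \<Rightarrow>\<^sub>0 nat) \<Rightarrow> nat" where
  "deg_in C m = (\<Sum>c\<in>C. Poly_Mapping.lookup m c)"

definition deg_in_ge :: "'v set \<Rightarrow> nat \<Rightarrow> ('v, 'k::comm_ring_1) mpoly set" where
  "deg_in_ge C d = {p. \<forall>m\<in>Poly_Mapping.keys p. d \<le> deg_in C m}"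

lemma mdeg_eq_deg_in_UNIV: "mdeg m = deg_in UNIV m"
  by (simp add: mdeg_def deg_in_def)

lemma deg_in_add: "deg_in C (a + b) = deg_in C a + deg_in C b"
  by (simp add: deg_in_def lookup_add sum.distrib)

lemma deg_in_zero [simp]: "deg_in C 0 = 0"
  by (simp add: deg_in_def)

lemma deg_in_sum: "deg_in C (\<Sum>i\<in>A. g i) = (\<Sum>i\<in>A. deg_in C (g i))"
  by (induction A rule: infinite_finite_induct) (simp_all add: deg_in_add)

lemma deg_in_single: "finite C \<Longrightarrow> deg_in C (Poly_Mapping.single i 1) = (if i \<in> C then 1 else 0)"
  by (simp add: deg_in_def lookup_single when_def sum.delta)

lemma mdeg_eq_one_iff: "mdeg (m :: 'v::finite \<Rightarrow>\<^sub>0 nat) = 1 \<longleftrightarrow> (\<exists>x. m = Poly_Mapping.single x 1)"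
proof
  assume "mdeg m = 1"
  then obtain x where "Poly_Mapping.lookup m x = 1" "\<And>v. x \<noteq> v \<Longrightarrow> Poly_Mapping.lookup m v = 0"
    unfolding mdeg_def sum_eq_1_iff[OF finite_UNIV] by blast
  then have "m = Poly_Mapping.single x 1"
    by (intro poly_mapping_eqI) (auto simp: lookup_single when_def)
  then show "\<exists>x. m = Poly_Mapping.single x 1" ..
qed (use deg_in_single[of "UNIV :: 'v set"] in \<open>auto simp: mdeg_eq_deg_in_UNIV\<close>)

lemma ex_var_factor_if_deg_in_pos:
  assumes "0 < deg_in C m"
  obtains c r where "c \<in> C" "m = r + Poly_Mapping.single c 1"
proof -
  obtain c where "c \<in> C" "0 < Poly_Mapping.lookup m c"
    using sum.not_neutral_contains_not_neutral[of "Poly_Mapping.lookup m" C] assms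
    by (auto simp: deg_in_def)
  moreover have "m = (m - Poly_Mapping.single c 1) + Poly_Mapping.single c 1"
    using \<open>0 < Poly_Mapping.lookup m c\<close>
    by (intro poly_mapping_eqI) (auto simp: lookup_add lookup_minus lookup_single when_def)
  ultimately show ?thesis using that by blast
qed

lemma deg_in_ge_zero [simp]: "deg_in_ge C 0 = UNIV"
  by (simp add: deg_in_ge_def)

lemma mult_mem_deg_in_ge:
  assumes "a \<in> deg_in_ge C d1" "b \<in> deg_in_ge C d2"
  shows "a * b \<in> deg_in_ge C (d1 + d2)"
  unfolding deg_in_ge_def
proof (intro CollectI ballI)
  fix m assume "m \<in> Poly_Mapping.keys (a * b)"
  then obtain x y where "m = x + y" "x \<in> Poly_Mapping.keys a" "y \<in> Poly_Mapping.keys b"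
    using keys_mult[of a b] by blast
  with assms show "d1 + d2 \<le> deg_in C m"
    by (auto simp: deg_in_ge_def deg_in_add intro: add_mono)
qed

lemma is_ideal_deg_in_ge: "is_ideal (deg_in_ge C d)"
proof -
  have "0 \<in> deg_in_ge C d"
    by (simp add: deg_in_ge_def)
  moreover have "a + b \<in> deg_in_ge C d" if "a \<in> deg_in_ge C d" "b \<in> deg_in_ge C d" for a b
    using that keys_add[of a b] by (auto simp: deg_in_ge_def)
  moreover have "r * a \<in> deg_in_ge C d" if "a \<in> deg_in_ge C d" for r a
    using mult_mem_deg_in_ge[of r C 0 a d] that by simp
  ultimately show ?thesis
    unfolding is_ideal_def by blast
qed

lemma ideal_pow_subset_deg_in_ge:
  assumes "I \<subseteq> deg_in_ge C d"
  shows "ideal_pow I n \<subseteq> deg_in_ge C (d * n)"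
proof (induction n)
  case (Suc n)
  then show ?case
    using assms mult_mem_deg_in_ge[of _ C d _ "d * n"]
    by (intro ideal_pow_Suc_least is_ideal_deg_in_ge) auto
qed simp

lemma prime_ideal_deg_in_ge_one:
  "prime_ideal (deg_in_ge C 1 :: ('v::finite, 'k::idom) mpoly set)"
proof -
  let ?W = "deg_in_ge C 1 :: ('v, 'k) mpoly set"
  define free_part :: "('v, 'k) mpoly \<Rightarrow> ('v, 'k) mpoly" where
    "free_part p = Abs_poly_mapping (\<lambda>m. if deg_in C m = 0 then Poly_Mapping.lookup p m else 0)" for p
  have lookup_free_part: "Poly_Mapping.lookup (free_part p) m =
      (if deg_in C m = 0 then Poly_Mapping.lookup p m else 0)" for p m
  proof -
    have "finite {m. (if deg_in C m = 0 then Poly_Mapping.lookup p m else 0) \<noteq> 0}"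
      by (rule finite_subset[of _ "Poly_Mapping.keys p"]) (auto simp: in_keys_iff)
    then show ?thesis by (simp add: free_part_def)
  qed
  have diff_free_part: "p - free_part p \<in> ?W" for p
    by (auto simp: deg_in_ge_def in_keys_iff lookup_minus lookup_free_part split: if_splits)
  have keys_free_part: "deg_in C m = 0" if "m \<in> Poly_Mapping.keys (free_part p)" for p m
    using that by (auto simp: in_keys_iff lookup_free_part split: if_splits)
  have free_part_nonzero: "free_part p \<noteq> 0" if p: "p \<notin> ?W" for p
  proof -
    obtain m where "m \<in> Poly_Mapping.keys p" "deg_in C m = 0"
      using p by (auto simp: deg_in_ge_def Suc_le_eq)
    then have "Poly_Mapping.lookup (free_part p) m \<noteq> 0"
      by (simp add: lookup_free_part in_keys_iff)
    then show ?thesis by auto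
  qed
  have "a \<in> ?W \<or> b \<in> ?W" if ab: "a * b \<in> ?W" for a b
  proof (rule ccontr)
    assume "\<not> (a \<in> ?W \<or> b \<in> ?W)"
    then have "free_part a * free_part b \<noteq> 0"
      by (simp add: free_part_nonzero mpoly_mult_neq_zero)
    then obtain m where m: "m \<in> Poly_Mapping.keys (free_part a * free_part b)"
      by fastforce
    define a' b' where "a' = a - free_part a" and "b' = b - free_part b"
    have "free_part a * free_part b = a * b - (free_part a * b' + a' * b)"
      by (simp add: a'_def b'_def algebra_simps)
    also have "\<dots> \<in> ?W"
      using ab diff_free_part[of a] diff_free_part[of b] is_ideal_deg_in_ge
      unfolding a'_def[symmetric] b'_def[symmetric]
      by (blast intro: ideal_diff ideal_add ideal_mult_left ideal_mult_right)
    finally have "1 \<le> deg_in C m"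
      using m by (auto simp: deg_in_ge_def)
    moreover have "deg_in C m = 0"
      using m keys_mult[of "free_part a" "free_part b"] keys_free_part by (force simp: deg_in_add)
    ultimately show False by simp
  qed
  moreover have "(1 :: ('v, 'k) mpoly) \<notin> ?W"
    by (simp add: deg_in_ge_def)
  ultimately show ?thesis
    unfolding prime_ideal_def using is_ideal_deg_in_ge by blast
qed

lemma colon_monomial_eq_deg_in_ge_one:
  fixes J :: "('v, 'k::comm_ring_1) mpoly set"
  assumes J: "is_ideal J"
    and J_deg: "J \<subseteq> deg_in_ge C (deg_in C m + 1)"
    and var_mult: "\<And>c. c \<in> C \<Longrightarrow> var c * Poly_Mapping.single m 1 \<in> J"
  shows "colon J (Poly_Mapping.single m 1) = deg_in_ge C 1"
proof (intro equalityI subsetI)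
  fix g assume "g \<in> colon J (Poly_Mapping.single m 1)"
  then have g: "Poly_Mapping.single m 1 * g \<in> deg_in_ge C (deg_in C m + 1)"
    using J_deg by (auto simp: colon_def mult.commute)
  show "g \<in> deg_in_ge C 1"
    unfolding deg_in_ge_def
  proof (intro CollectI ballI)
    fix q assume "q \<in> Poly_Mapping.keys g"
    then have "deg_in C m + 1 \<le> deg_in C (m + q)"
      using g add_mem_keys_single_mult[of q g m] by (auto simp: deg_in_ge_def)
    then show "1 \<le> deg_in C q"
      by (simp add: deg_in_add)
  qed
next
  fix g :: "('v, 'k) mpoly" assume g: "g \<in> deg_in_ge C 1"
  have "Poly_Mapping.single q (Poly_Mapping.lookup g q) * Poly_Mapping.single m 1 \<in> J"
    if "q \<in> Poly_Mapping.keys g" for q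
  proof -
    have "0 < deg_in C q"
      using g that by (auto simp: deg_in_ge_def)
    then obtain c r where "c \<in> C" "q = r + Poly_Mapping.single c 1"
      by (rule ex_var_factor_if_deg_in_pos)
    then have "Poly_Mapping.single q (Poly_Mapping.lookup g q) * Poly_Mapping.single m 1 =
        Poly_Mapping.single r (Poly_Mapping.lookup g q) * (var c * Poly_Mapping.single m 1)"
      by (simp add: var_def mult_single add.assoc)
    also have "\<dots> \<in> J"
      using J var_mult[OF \<open>c \<in> C\<close>] by (rule ideal_mult_left)
    finally show ?thesis .
  qed
  with J show "g \<in> colon J (Poly_Mapping.single m 1)"
    unfolding colon_def by (blast intro: mult_mem_ideal_by_terms)
qed

section \<open>Degrees of v-number witnesses\<close>

definition is_v_degree :: "('v::finite, 'k::field) mpoly set \<Rightarrow> nat \<Rightarrow> bool" where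
  "is_v_degree J k \<longleftrightarrow> (\<exists>f P. homogeneous k f \<and> P \<in> Ass J \<and> colon J f = P)"

lemma v_number_eq_Least: "v_number J = Least (is_v_degree J)"
  unfolding v_number_def is_v_degree_def ..

lemma v_number_le: "is_v_degree J k \<Longrightarrow> v_number J \<le> k"
  unfolding v_number_eq_Least by (rule Least_le)

lemma is_v_degree_v_number: "is_v_degree J k \<Longrightarrow> is_v_degree J (v_number J)"
  unfolding v_number_eq_Least by (rule LeastI)

lemma v_number_eqI:
  "is_v_degree J k \<Longrightarrow> (\<And>k'. is_v_degree J k' \<Longrightarrow> k \<le> k') \<Longrightarrow> v_number J = k"
  unfolding v_number_eq_Least by (rule Least_equality)

lemma is_v_degree_monomial:
  fixes J :: "('v::finite, 'k::field) mpoly set"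
  assumes "is_ideal J"
    and "J \<subseteq> deg_in_ge C (deg_in C m + 1)"
    and "\<And>c. c \<in> C \<Longrightarrow> var c * Poly_Mapping.single m 1 \<in> J"
  shows "is_v_degree J (mdeg m)"
proof -
  have "homogeneous (mdeg m) (Poly_Mapping.single m (1::'k))"
    by (simp add: homogeneous_def)
  moreover have "colon J (Poly_Mapping.single m 1) = deg_in_ge C 1"
    using assms by (rule colon_monomial_eq_deg_in_ge_one)
  ultimately show ?thesis
    unfolding is_v_degree_def Ass_def using prime_ideal_deg_in_ge_one by blast
qed

lemma is_v_degree_lower_bound:
  fixes J :: "('v::finite, 'k::field) mpoly set"
  assumes "is_v_degree J k" "is_ideal J"
    and J_deg: "J \<subseteq> deg_in_ge UNIV d"
    and var_mem: "\<And>P. P \<in> Ass J \<Longrightarrow> \<exists>z. var z \<in> P"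
  shows "d \<le> k + 1"
proof -
  obtain f where f: "homogeneous k f" and Ass: "colon J f \<in> Ass J"
    using \<open>is_v_degree J k\<close> by (auto simp: is_v_degree_def)
  then have "f \<noteq> 0"
    using Ass nonzero_if_colon_prime[OF \<open>is_ideal J\<close>, of f] by (simp add: Ass_def)
  then obtain m where m: "m \<in> Poly_Mapping.keys f"
    by fastforce
  obtain z where "var z \<in> colon J f"
    using var_mem[OF Ass] by blast
  then have "var z * f \<in> deg_in_ge UNIV d"
    using J_deg by (auto simp: colon_def)
  moreover have "Poly_Mapping.single z 1 + m \<in> Poly_Mapping.keys (var z * f)"
    unfolding var_def using m by (rule add_mem_keys_single_mult)
  ultimately have "d \<le> deg_in UNIV (Poly_Mapping.single z 1 + m)"
    by (auto simp: deg_in_ge_def)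
  also have "\<dots> = k + 1"
    using f m deg_in_single[of UNIV z]
    by (simp add: deg_in_add homogeneous_def mdeg_eq_deg_in_UNIV)
  finally show ?thesis .
qed

section \<open>Edge ideals\<close>

lemma var_prod_eq_var_mult: "var_prod i j = var i * var j"
  by (simp add: var_prod_def var_def mult_single)

lemma var_prod_mem_edge_ideal: "E i j \<Longrightarrow> var_prod i j \<in> edge_ideal E"
  unfolding edge_ideal_def by (rule subsetD[OF ideal_gen_subset]) blast

lemma is_ideal_edge_ideal: "is_ideal (edge_ideal E)"
  unfolding edge_ideal_def by (rule is_ideal_ideal_gen)

lemma edge_ideal_subset_deg_in_ge:
  assumes "\<And>i j. E i j \<Longrightarrow> d \<le> deg_in C (Poly_Mapping.single i 1 + Poly_Mapping.single j 1)"
  shows "edge_ideal E \<subseteq> deg_in_ge C d"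
  unfolding edge_ideal_def using assms
  by (intro ideal_gen_least is_ideal_deg_in_ge) (auto simp: deg_in_ge_def var_prod_def)

definition edge_divisible :: "('v \<Rightarrow> 'v \<Rightarrow> bool) \<Rightarrow> ('v, 'k::comm_ring_1) mpoly set" where
  "edge_divisible E = {p. \<forall>m\<in>Poly_Mapping.keys p.
     \<exists>i j. E i j \<and> 0 < Poly_Mapping.lookup m i \<and> 0 < Poly_Mapping.lookup m j}"

lemma is_ideal_edge_divisible: "is_ideal (edge_divisible E)"
proof -
  have "r * a \<in> edge_divisible E" if "a \<in> edge_divisible E" for r a
  proof -
    have "\<exists>i j. E i j \<and> 0 < Poly_Mapping.lookup (q + m) i \<and> 0 < Poly_Mapping.lookup (q + m) j"
      if "m \<in> Poly_Mapping.keys a" for q m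
      using \<open>a \<in> edge_divisible E\<close> that by (fastforce simp: edge_divisible_def lookup_add)
    then show ?thesis
      using keys_mult[of r a] by (fastforce simp: edge_divisible_def)
  qed
  moreover have "a + b \<in> edge_divisible E" if "a \<in> edge_divisible E" "b \<in> edge_divisible E" for a b
    using that keys_add[of a b] by (auto simp: edge_divisible_def)
  moreover have "0 \<in> edge_divisible E"
    by (simp add: edge_divisible_def)
  ultimately show ?thesis
    unfolding is_ideal_def by blast
qed

lemma edge_ideal_subset_edge_divisible: "edge_ideal E \<subseteq> edge_divisible E"
  unfolding edge_ideal_def
  by (intro ideal_gen_least is_ideal_edge_divisible)
    (fastforce simp: edge_divisible_def var_prod_def lookup_add lookup_single)

lemma edge_if_var_mult_mem_edge_ideal:
  assumes E: "simple_graph E"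
    and mem: "var z * f \<in> edge_ideal E"
    and x: "Poly_Mapping.single x 1 \<in> Poly_Mapping.keys f"
  shows "E z x"
proof -
  have "Poly_Mapping.single z 1 + Poly_Mapping.single x 1 \<in> Poly_Mapping.keys (var z * f)"
    unfolding var_def using x by (rule add_mem_keys_single_mult)
  then obtain i j where "E i j"
    and "0 < Poly_Mapping.lookup (Poly_Mapping.single z 1 + Poly_Mapping.single x (1::nat)) i"
    and "0 < Poly_Mapping.lookup (Poly_Mapping.single z 1 + Poly_Mapping.single x (1::nat)) j"
    using mem edge_ideal_subset_edge_divisible by (fastforce simp: edge_divisible_def)
  moreover have "i \<noteq> j"
    using E \<open>E i j\<close> by (auto simp: simple_graph_def)
  ultimately show ?thesis
    using E by (auto simp: simple_graph_def lookup_add lookup_single when_def split: if_splits)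
qed

text \<open>Without some witness the \<open>LEAST\<close> in \<open>v_number\<close> would be unspecified. The witness is
  \<open>x\<^sup>A\<close> for a maximal independent set \<open>A\<close>, whose colon ideal is generated by the variables
  outside \<open>A\<close>.\<close>

lemma edge_ideal_has_v_degree:
  fixes E :: "'v::finite \<Rightarrow> 'v \<Rightarrow> bool"
  assumes E: "simple_graph E"
  shows "\<exists>k. is_v_degree (edge_ideal E :: ('v, 'k::field) mpoly set) k"
proof -
  let ?indep = "{A. \<forall>a\<in>A. \<forall>b\<in>A. \<not> E a b}"
  obtain A where A: "A \<in> ?indep" and A_max: "\<And>B. B \<in> ?indep \<Longrightarrow> A \<subseteq> B \<Longrightarrow> A = B"
    using finite_has_maximal[of ?indep] by force
  have A_nbr: "\<exists>a\<in>A. E c a" if "c \<notin> A" for c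
  proof (rule ccontr)
    assume "\<not> (\<exists>a\<in>A. E c a)"
    then have "insert c A \<in> ?indep"
      using A E by (auto simp: simple_graph_def)
    with A_max \<open>c \<notin> A\<close> show False by blast
  qed
  define m where "m = (\<Sum>a\<in>A. Poly_Mapping.single a (1::nat))"
  have "deg_in (- A) m = 0"
    using deg_in_single[of "- A"] by (simp add: m_def deg_in_sum)
  moreover have "edge_ideal E \<subseteq> (deg_in_ge (- A) 1 :: ('v, 'k) mpoly set)"
    using A deg_in_single[of "- A"]
    by (intro edge_ideal_subset_deg_in_ge) (force simp: deg_in_add)
  moreover have "var c * Poly_Mapping.single m 1 \<in> (edge_ideal E :: ('v, 'k) mpoly set)"
    if "c \<in> - A" for c
  proof -
    obtain a where "a \<in> A" "E c a"
      using A_nbr \<open>c \<in> - A\<close> by blast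
    then have "m = Poly_Mapping.single a 1 + (\<Sum>b\<in>A - {a}. Poly_Mapping.single b 1)"
      unfolding m_def by (simp add: sum.remove)
    then have "var c * Poly_Mapping.single m 1 =
        var_prod c a * Poly_Mapping.single (\<Sum>b\<in>A - {a}. Poly_Mapping.single b 1) (1::'k)"
      by (simp add: var_prod_eq_var_mult var_def mult_single add.assoc)
    also have "\<dots> \<in> edge_ideal E"
      using is_ideal_edge_ideal var_prod_mem_edge_ideal[of E, OF \<open>E c a\<close>] by (rule ideal_mult_right)
    finally show ?thesis .
  qed
  ultimately have "is_v_degree (edge_ideal E :: ('v, 'k) mpoly set) (mdeg m)"
    by (intro is_v_degree_monomial[OF is_ideal_edge_ideal, of _ "- A"]) simp_all
  then show ?thesis ..
qed

lemma is_v_degree_edgeless: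
  assumes "\<And>i j. \<not> E i j"
  shows "is_v_degree (edge_ideal E :: ('v::finite, 'k::field) mpoly set) 0"
proof -
  have "edge_ideal E \<subseteq> (deg_in_ge {} (deg_in {} 0 + 1) :: ('v, 'k) mpoly set)"
    using assms by (intro edge_ideal_subset_deg_in_ge) blast
  from is_v_degree_monomial[OF is_ideal_edge_ideal this] show ?thesis
    by (simp add: mdeg_eq_deg_in_UNIV)
qed

lemma neighbourhood_cover_if_v_degree_one:
  fixes E :: "'v::finite \<Rightarrow> 'v \<Rightarrow> bool"
  assumes E: "simple_graph E"
    and "is_v_degree (edge_ideal E :: ('v, 'k::field) mpoly set) 1"
  obtains x where "\<And>a b. E a b \<Longrightarrow> E x a \<or> E x b"
proof -
  let ?I = "edge_ideal E :: ('v, 'k) mpoly set"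
  obtain f where f: "homogeneous 1 f" and P: "prime_ideal (colon ?I f)"
    using assms(2) by (auto simp: is_v_degree_def Ass_def)
  then have "f \<noteq> 0"
    using nonzero_if_colon_prime is_ideal_edge_ideal by blast
  then obtain m where "m \<in> Poly_Mapping.keys f"
    by fastforce
  moreover from this f obtain x where "m = Poly_Mapping.single x 1"
    using mdeg_eq_one_iff by (auto simp: homogeneous_def)
  ultimately have x: "Poly_Mapping.single x 1 \<in> Poly_Mapping.keys f"
    by simp
  have "E x a \<or> E x b" if "E a b" for a b
  proof -
    have "var a * var b \<in> colon ?I f"
      using var_prod_mem_edge_ideal[of E, OF \<open>E a b\<close>] ideal_subset_colon[OF is_ideal_edge_ideal]
      by (auto simp: var_prod_eq_var_mult)
    then consider "var a \<in> colon ?I f" | "var b \<in> colon ?I f"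
      using P prime_ideal_multD by blast
    then show ?thesis
      using edge_if_var_mult_mem_edge_ideal[OF E _ x] E
      by cases (auto simp: colon_def mult.commute simple_graph_def)
  qed
  then show ?thesis using that by blast
qed

lemma is_v_degree_edge_ideal_pow:
  fixes E :: "'v::finite \<Rightarrow> 'v \<Rightarrow> bool"
  assumes E: "simple_graph E" and "E x y"
    and cover: "\<And>a b. E a b \<Longrightarrow> E x a \<or> E x b"
  shows "is_v_degree (ideal_pow (edge_ideal E :: ('v, 'k::field) mpoly set) (Suc n)) (2 * n + 1)"
proof -
  let ?J = "ideal_pow (edge_ideal E :: ('v, 'k) mpoly set) (Suc n)"
  define N where "N = {c. E x c}"
  define e where "e = Poly_Mapping.single x 1 + Poly_Mapping.single y (1::nat)"
  define m where "m = (\<Sum>i<n. e) + Poly_Mapping.single x 1"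
  have "x \<notin> N" "y \<in> N"
    using E \<open>E x y\<close> by (auto simp: N_def simple_graph_def)
  then have "deg_in N e = 1"
    using deg_in_single[of N] by (simp add: e_def deg_in_add)
  then have "deg_in N m = n"
    using deg_in_single[of N] \<open>x \<notin> N\<close> by (simp add: m_def deg_in_add deg_in_sum)
  have "1 \<le> deg_in N (Poly_Mapping.single i 1 + Poly_Mapping.single j 1)" if "E i j" for i j
    using cover[OF that] deg_in_single[of N i] deg_in_single[of N j] by (auto simp: N_def deg_in_add)
  then have "edge_ideal E \<subseteq> (deg_in_ge N 1 :: ('v, 'k) mpoly set)"
    by (rule edge_ideal_subset_deg_in_ge)
  then have "?J \<subseteq> deg_in_ge N (1 * Suc n)"
    by (rule ideal_pow_subset_deg_in_ge)
  then have J_deg: "?J \<subseteq> deg_in_ge N (deg_in N m + 1)"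
    using \<open>deg_in N m = n\<close> by simp
  have var_mult: "var c * Poly_Mapping.single m 1 \<in> ?J" if "c \<in> N" for c
  proof -
    have power: "var_prod x y ^ n = Poly_Mapping.single (\<Sum>i<n. e) (1::'k)"
      by (simp add: var_prod_def e_def single_power)
    have "var c * Poly_Mapping.single m (1::'k) = var_prod x c * var_prod x y ^ n"
      unfolding power by (simp add: var_prod_def var_def m_def mult_single add_ac)
    also have "\<dots> \<in> ?J"
      using \<open>c \<in> N\<close> \<open>E x y\<close>
      by (intro ideal_pow_Suc_mult power_mem_ideal_pow var_prod_mem_edge_ideal) (simp_all add: N_def)
    finally show ?thesis .
  qed
  have "mdeg m = 2 * n + 1"
    using deg_in_single[of "UNIV :: 'v set"]
    by (simp add: mdeg_eq_deg_in_UNIV e_def m_def deg_in_add deg_in_sum)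
  with is_v_degree_monomial[OF is_ideal_ideal_pow J_deg var_mult] show ?thesis
    by simp
qed

lemma edge_ideal_pow_v_degree_ge:
  fixes E :: "'v::finite \<Rightarrow> 'v \<Rightarrow> bool"
  assumes "E x y"
    and "is_v_degree (ideal_pow (edge_ideal E :: ('v, 'k::field) mpoly set) (Suc n)) k"
  shows "2 * n + 1 \<le> k"
proof -
  let ?J = "ideal_pow (edge_ideal E :: ('v, 'k) mpoly set) (Suc n)"
  have "edge_ideal E \<subseteq> (deg_in_ge UNIV 2 :: ('v, 'k) mpoly set)"
    using deg_in_single[of "UNIV :: 'v set"] by (intro edge_ideal_subset_deg_in_ge) (simp add: deg_in_add)
  then have "?J \<subseteq> deg_in_ge UNIV (2 * Suc n)"
    by (rule ideal_pow_subset_deg_in_ge)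
  moreover have "\<exists>z. var z \<in> P" if P: "P \<in> Ass ?J" for P
  proof -
    obtain f where "P = colon ?J f" "prime_ideal P"
      using P by (auto simp: Ass_def)
    then have "?J \<subseteq> P" "prime_ideal P"
      using ideal_subset_colon[OF is_ideal_ideal_pow] by auto
    moreover have "(var x * var y) ^ Suc n \<in> ?J"
      unfolding var_prod_eq_var_mult[symmetric]
      using var_prod_mem_edge_ideal[of E, OF \<open>E x y\<close>] by (rule power_mem_ideal_pow)
    ultimately show ?thesis
      using prime_ideal_multD prime_ideal_powerD by blast
  qed
  ultimately have "2 * Suc n \<le> k + 1"
    using is_v_degree_lower_bound[OF assms(2) is_ideal_ideal_pow] by blast
  then show ?thesis by simp
qed

lemma v_number_edge_ideal_pow:
  fixes E :: "'v::finite \<Rightarrow> 'v \<Rightarrow> bool"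
  assumes "simple_graph E" "E x y"
    and "\<And>a b. E a b \<Longrightarrow> E x a \<or> E x b"
  shows "v_number (ideal_pow (edge_ideal E :: ('v, 'k::field) mpoly set) (Suc n)) = 2 * n + 1"
  using assms by (intro v_number_eqI is_v_degree_edge_ideal_pow edge_ideal_pow_v_degree_ge)

theorem corollary4p16:
  fixes E :: "'v::finite \<Rightarrow> 'v \<Rightarrow> bool"
  assumes "simple_graph E"
    and "v_number (edge_ideal E :: ('v, 'k::field) mpoly set) = 1"
  shows "\<forall>n\<ge>1. v_number (ideal_pow (edge_ideal E :: ('v, 'k) mpoly set) (n + 1)) = 2 * n + 1"
proof -
  let ?I = "edge_ideal E :: ('v, 'k) mpoly set"
  obtain k where "is_v_degree ?I k"
    using edge_ideal_has_v_degree[OF assms(1)] by blast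
  then have "is_v_degree ?I 1"
    using is_v_degree_v_number assms(2) by fastforce
  then obtain x where cover: "\<And>a b. E a b \<Longrightarrow> E x a \<or> E x b"
    using neighbourhood_cover_if_v_degree_one[OF assms(1)] by blast
  have "\<exists>a b. E a b"
  proof (rule ccontr)
    assume "\<not> (\<exists>a b. E a b)"
    then have "is_v_degree ?I 0"
      by (intro is_v_degree_edgeless) blast
    then have "v_number ?I \<le> 0"
      by (rule v_number_le)
    with assms(2) show False
      by simp
  qed
  then obtain y where "E x y"
    using cover by blast
  then show ?thesis
    using v_number_edge_ideal_pow[OF assms(1) _ cover] by auto
qed

end
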